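(* Let $\mathcal A$ be an associative unital $*$-algebra over $\mathbb C$, let $\Omega^1$ be an $\mathcal A$-bimodule, and let $d:\mathcal A\to\Omega^1$ be a $\mathbb C$-linear derivation, i.e. $d(fg)=f\,dg+df\,g$ for all $f,g\in\mathcal A$. Let $\overline{\Omega^1}$ be the complex-conjugate vector space, made into an $\mathcal A$-bimodule by $f\cdot\overline{\beta}\cdot g:=\overline{g^*\beta f^*}$, and let $d^\dagger:\mathcal A\to\overline{\Omega^1}$ be defined by $d^\dagger(f):=-\overline{d(f^* )}$ (this is again a derivation). Let $\omega:\Omega^1\otimes_{\mathbb C}\overline{\Omega^1}\to\mathbb C$ be a linear map satisfying $\omega\big((f\alpha g)\otimes\alpha'\big)=\omega\big(\alpha\otimes(g\alpha' f)\big)$ for all $\alpha\in\Omega^1$, $\alpha'\in\overline{\Omega^1}$, $f,g\in\mathcal A$. Define $\Psi(f\otimes g):=\omega(df\otimes d^\dagger g)-\omega(dg\otimes d^\dagger f)$ for $f,g\in\mathcal A$. Then for all $f_0,f_1,f_2\in\mathcal A$, $$\Psi(f_0f_1\otimes f_2)+\Psi(f_1f_2\otimes f_0)+\Psi(f_2f_0\otimes f_1)=0,$$ i.e. $\Psi$ is a cyclic $2$-cocycle on $\mathcal A$.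
   Context: Complex conjugate space: $\overline{V}$ is $V$ with conjugated scalar multiplication, elements written $\overline{v}$. *)

theory Defs
  imports Complex_Main
begin

definition cvec :: "(complex \<Rightarrow> 'b::ab_group_add \<Rightarrow> 'b) \<Rightarrow> bool" where
  "cvec sm \<longleftrightarrow>
     (\<forall>a b x. sm a (sm b x) = sm (a * b) x) \<and> (\<forall>x. sm 1 x = x) \<and>
     (\<forall>a x y. sm a (x + y) = sm a x + sm a y) \<and>
     (\<forall>a b x. sm (a + b) x = sm a x + sm b x)"

definition cstar_algebra :: "(complex \<Rightarrow> 'a::ring_1 \<Rightarrow> 'a) \<Rightarrow> ('a \<Rightarrow> 'a) \<Rightarrow> bool" where
  "cstar_algebra smA st \<longleftrightarrow>
     cvec smA \<and>
     (\<forall>c x y. smA c (x * y) = smA c x * y) \<and>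
     (\<forall>c x y. smA c (x * y) = x * smA c y) \<and>
     (\<forall>x y. st (x + y) = st x + st y) \<and>
     (\<forall>c x. st (smA c x) = smA (cnj c) (st x)) \<and>
     (\<forall>x. st (st x) = x) \<and>
     (\<forall>x y. st (x * y) = st y * st x)"

definition bimodule :: "(complex \<Rightarrow> 'a::ring_1 \<Rightarrow> 'a) \<Rightarrow> (complex \<Rightarrow> 'b::ab_group_add \<Rightarrow> 'b)
    \<Rightarrow> ('a \<Rightarrow> 'b \<Rightarrow> 'b) \<Rightarrow> ('b \<Rightarrow> 'a \<Rightarrow> 'b) \<Rightarrow> bool" where
  "bimodule smA smB la ra \<longleftrightarrow>
     cvec smB \<and>
     (\<forall>f g x. la (f * g) x = la f (la g x)) \<and> (\<forall>x. la 1 x = x) \<and>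
     (\<forall>f g x. la (f + g) x = la f x + la g x) \<and>
     (\<forall>f x y. la f (x + y) = la f x + la f y) \<and>
     (\<forall>c f x. la (smA c f) x = smB c (la f x)) \<and>
     (\<forall>c f x. la f (smB c x) = smB c (la f x)) \<and>
     (\<forall>f g x. ra x (f * g) = ra (ra x f) g) \<and> (\<forall>x. ra x 1 = x) \<and>
     (\<forall>f g x. ra x (f + g) = ra x f + ra x g) \<and>
     (\<forall>f x y. ra (x + y) f = ra x f + ra y f) \<and>
     (\<forall>c f x. ra x (smA c f) = smB c (ra x f)) \<and>
     (\<forall>c f x. ra (smB c x) f = smB c (ra x f)) \<and>
     (\<forall>f g x. ra (la f x) g = la f (ra x g))"

definition derivation :: "(complex \<Rightarrow> 'a::ring_1 \<Rightarrow> 'a) \<Rightarrow> (complex \<Rightarrow> 'b::ab_group_add \<Rightarrow> 'b)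
    \<Rightarrow> ('a \<Rightarrow> 'b \<Rightarrow> 'b) \<Rightarrow> ('b \<Rightarrow> 'a \<Rightarrow> 'b) \<Rightarrow> ('a \<Rightarrow> 'b) \<Rightarrow> bool" where
  "derivation smA smB la ra d \<longleftrightarrow>
     (\<forall>f g. d (f + g) = d f + d g) \<and>
     (\<forall>c f. d (smA c f) = smB c (d f)) \<and>
     (\<forall>f g. d (f * g) = la f (d g) + ra (d f) g)"

text \<open>The complex-conjugate space: an element \<open>\<beta>\<close> of type 'b stands for \<open>conj \<beta>\<close>.
  Addition is unchanged; scalar multiplication is conjugated; the bimodule structure is
  f \<cdot> conj(\<beta>) \<cdot> g = conj(g* \<beta> f*).\<close>
definition conj_smul :: "(complex \<Rightarrow> 'b \<Rightarrow> 'b) \<Rightarrow> complex \<Rightarrow> 'b \<Rightarrow> 'b" where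
  "conj_smul smB c x = smB (cnj c) x"

definition conj_la :: "('b \<Rightarrow> 'a \<Rightarrow> 'b) \<Rightarrow> ('a \<Rightarrow> 'a) \<Rightarrow> 'a \<Rightarrow> 'b \<Rightarrow> 'b" where
  "conj_la ra st f x = ra x (st f)"

definition conj_ra :: "('a \<Rightarrow> 'b \<Rightarrow> 'b) \<Rightarrow> ('a \<Rightarrow> 'a) \<Rightarrow> 'b \<Rightarrow> 'a \<Rightarrow> 'b" where
  "conj_ra la st x g = la (st g) x"

text \<open>d-dagger(f) = - conj(d(f*)), as an element of the conjugate space.\<close>
definition dagger :: "('a \<Rightarrow> 'a) \<Rightarrow> ('a \<Rightarrow> 'b::ab_group_add) \<Rightarrow> 'a \<Rightarrow> 'b" where
  "dagger st d f = - d (st f)"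

text \<open>A linear map \<Omega>^1 \<otimes>_C conj(\<Omega>^1) \<rightarrow> C, given (universal property of the tensor product)
  by a C-bilinear map \<Omega>^1 \<times> conj(\<Omega>^1) \<rightarrow> C.\<close>
definition tensor_functional :: "(complex \<Rightarrow> 'b::ab_group_add \<Rightarrow> 'b) \<Rightarrow> ('b \<Rightarrow> 'b \<Rightarrow> complex) \<Rightarrow> bool" where
  "tensor_functional smB \<omega> \<longleftrightarrow>
     (\<forall>x y z. \<omega> (x + y) z = \<omega> x z + \<omega> y z) \<and>
     (\<forall>c x z. \<omega> (smB c x) z = c * \<omega> x z) \<and>
     (\<forall>x y z. \<omega> x (y + z) = \<omega> x y + \<omega> x z) \<and>
     (\<forall>c x y. \<omega> x (conj_smul smB c y) = c * \<omega> x y)"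

definition Psi :: "('a \<Rightarrow> 'a) \<Rightarrow> ('a \<Rightarrow> 'b::ab_group_add) \<Rightarrow> ('b \<Rightarrow> 'b \<Rightarrow> complex) \<Rightarrow> 'a \<Rightarrow> 'a \<Rightarrow> complex" where
  "Psi st d \<omega> f g = \<omega> (d f) (dagger st d g) - \<omega> (d g) (dagger st d f)"

end

theory Submission
  imports Defs
begin

text \<open>By the Leibniz rule for \<open>d\<close> and \<open>d\<dagger>\<close>, and by moving algebra elements across \<open>\<omega>\<close> with
  the balancing condition, \<open>\<Psi>(xy \<otimes> z)\<close> becomes \<open>(A(y,z,x) - A(x,y,z)) + (B(z,x,y) - B(x,y,z))\<close>
  with \<open>A(p,q,r) = \<omega>(p dq \<otimes> d(r*))\<close> and \<open>B(p,q,r) = \<omega>(dp q \<otimes> d(r*))\<close>. Each bracket is a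
  difference of cyclic permutations, so the cyclic sum vanishes.\<close>

definition balanced ::
    "('a \<Rightarrow> 'b \<Rightarrow> 'b) \<Rightarrow> ('b \<Rightarrow> 'a \<Rightarrow> 'b) \<Rightarrow> ('a \<Rightarrow> 'a) \<Rightarrow> ('b \<Rightarrow> 'b \<Rightarrow> complex) \<Rightarrow> bool" where
  "balanced la ra st \<omega> \<longleftrightarrow>
     (\<forall>\<alpha> \<alpha>' f g. \<omega> (ra (la f \<alpha>) g) \<alpha>' = \<omega> \<alpha> (conj_ra la st (conj_la ra st g \<alpha>') f))"

lemma tensor_functional_minus_right:
  assumes "tensor_functional smB \<omega>"
  shows "\<omega> x (- y) = - \<omega> x y"
proof -
  have "additive (\<omega> x)"
    using assms by unfold_locales (simp add: tensor_functional_def)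
  then show ?thesis
    by (rule additive.minus)
qed

lemma cstar_algebra_star_one:
  assumes "cstar_algebra smA st"
  shows "st 1 = 1"
proof -
  have st_st: "\<And>x. st (st x) = x" and st_mult: "\<And>x y. st (x * y) = st y * st x"
    using assms by (auto simp: cstar_algebra_def)
  have "st 1 = st 1 * st (st 1)" by (simp add: st_st)
  also have "\<dots> = st (st 1 * 1)" by (simp only: st_mult)
  also have "\<dots> = 1" by (simp add: st_st)
  finally show ?thesis .
qed

lemma balanced_iff:
  "balanced la ra st \<omega> \<longleftrightarrow> (\<forall>\<alpha> \<beta> f g. \<omega> (ra (la f \<alpha>) g) \<beta> = \<omega> \<alpha> (la (st f) (ra \<beta> (st g))))"
  by (simp add: balanced_def conj_ra_def conj_la_def)

lemma balanced_left_action: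
  assumes "cstar_algebra smA st" and "bimodule smA smB la ra" and "balanced la ra st \<omega>"
  shows "\<omega> (la f \<alpha>) \<beta> = \<omega> \<alpha> (la (st f) \<beta>)"
  using assms(3)[unfolded balanced_iff, rule_format, of f \<alpha> 1 \<beta>] assms(2)
  by (simp add: cstar_algebra_star_one[OF assms(1)] bimodule_def)

lemma balanced_right_action:
  assumes "cstar_algebra smA st" and "bimodule smA smB la ra" and "balanced la ra st \<omega>"
  shows "\<omega> (ra \<alpha> g) \<beta> = \<omega> \<alpha> (ra \<beta> (st g))"
  using assms(3)[unfolded balanced_iff, rule_format, of 1 \<alpha> g \<beta>] assms(2)
  by (simp add: cstar_algebra_star_one[OF assms(1)] bimodule_def)

lemma Psi_mult_left:
  assumes alg: "cstar_algebra smA st" and bimod: "bimodule smA smB la ra"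
    and der: "derivation smA smB la ra d" and tf: "tensor_functional smB \<omega>"
    and bal: "balanced la ra st \<omega>"
  shows "Psi st d \<omega> (x * y) z =
    (\<omega> (la y (d z)) (d (st x)) - \<omega> (la x (d y)) (d (st z))) +
    (\<omega> (ra (d z) x) (d (st y)) - \<omega> (ra (d x) y) (d (st z)))"
proof -
  have leibniz: "\<And>f g. d (f * g) = la f (d g) + ra (d f) g"
    using der by (simp add: derivation_def)
  have st_mult: "\<And>x y. st (x * y) = st y * st x"
    using alg by (simp add: cstar_algebra_def)
  have "Psi st d \<omega> (x * y) z = \<omega> (d z) (d (st (x * y))) - \<omega> (d (x * y)) (d (st z))"
    by (simp add: Psi_def dagger_def tensor_functional_minus_right[OF tf])
  also have "\<dots> = \<omega> (d z) (la (st y) (d (st x))) + \<omega> (d z) (ra (d (st y)) (st x))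
      - \<omega> (la x (d y)) (d (st z)) - \<omega> (ra (d x) y) (d (st z))"
    using tf by (simp add: st_mult leibniz tensor_functional_def)
  also have "\<dots> = \<omega> (la y (d z)) (d (st x)) + \<omega> (ra (d z) x) (d (st y))
      - \<omega> (la x (d y)) (d (st z)) - \<omega> (ra (d x) y) (d (st z))"
    by (simp add: balanced_left_action[OF alg bimod bal] balanced_right_action[OF alg bimod bal])
  finally show ?thesis
    by simp
qed

theorem mainTheorem1:
  fixes smA :: "complex \<Rightarrow> 'a::ring_1 \<Rightarrow> 'a" and st :: "'a \<Rightarrow> 'a"
    and smB :: "complex \<Rightarrow> 'b::ab_group_add \<Rightarrow> 'b"
    and la :: "'a \<Rightarrow> 'b \<Rightarrow> 'b" and ra :: "'b \<Rightarrow> 'a \<Rightarrow> 'b"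
    and d :: "'a \<Rightarrow> 'b" and \<omega> :: "'b \<Rightarrow> 'b \<Rightarrow> complex"
  assumes "cstar_algebra smA st"
    and "bimodule smA smB la ra"
    and "derivation smA smB la ra d"
    and "tensor_functional smB \<omega>"
    and "\<forall>\<alpha> \<alpha>' f g. \<omega> (ra (la f \<alpha>) g) \<alpha>' = \<omega> \<alpha> (conj_ra la st (conj_la ra st g \<alpha>') f)"
  shows "\<forall>f0 f1 f2. Psi st d \<omega> (f0 * f1) f2 + Psi st d \<omega> (f1 * f2) f0 + Psi st d \<omega> (f2 * f0) f1 = 0"
proof -
  have "balanced la ra st \<omega>"
    using assms(5) by (simp add: balanced_def)
  then show ?thesis
    by (simp add: Psi_mult_left[OF assms(1-4)])
qed

end
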